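(* Let $n\ge0$, $\alpha,\beta\in D_n$ and $1\le k\le 2n+1$. Then $\alpha\preccurlyeq\beta$ if and only if $l_k(\alpha)\preccurlyeq l_k(\beta)$.
   Context: $D_n$ is the set of non-crossing perfect matchings of $\{1,\ldots,2n\}$ (non-crossing $n$-chord diagrams), $D_0=\{\phi\}$. For $1\le k\le 2n+1$, $l_k:D_n\to D_{n+1}$: $l_k(\alpha)$ matches $k$ with $k+1$, and each old point $i$ becomes $i$ if $i<k$ and $i+2$ if $i\ge k$, old pairs kept. Restricted sequence of $\alpha\in D_n$ ($n\ge1$): let $k_n$ be the smallest $k$ with $k$ matched to $k+1$ and let $\alpha'$ be $\alpha$ with that arc removed (renumbered); the restricted sequence is $(k_n,k_{n-1},\ldots,k_1)$ where $(k_{n-1},\ldots,k_1)$ is the restricted sequence of $\alpha'$ (empty for $\phi$). Partial order: $\alpha\preccurlyeq\beta$ iff, writing $(a_n,\ldots,a_1)$ and $(b_n,\ldots,b_1)$ for their restricted sequences, $a_i\le b_i$ for all $1\le i\le n$. *)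

theory Defs
  imports Main
begin

text \<open>A chord diagram on {1..2n} is represented as a set of arcs (i,j) with i < j.\<close>

definition perfect_matching :: "nat \<Rightarrow> (nat \<times> nat) set \<Rightarrow> bool" where
  "perfect_matching n M \<longleftrightarrow>
     (\<forall>(i,j)\<in>M. 1 \<le> i \<and> i < j \<and> j \<le> 2*n) \<and>
     (\<forall>x\<in>{1..2*n}. \<exists>!p. p \<in> M \<and> (fst p = x \<or> snd p = x))"

definition non_crossing :: "(nat \<times> nat) set \<Rightarrow> bool" where
  "non_crossing M \<longleftrightarrow>
     \<not> (\<exists>a b c d. (a,b) \<in> M \<and> (c,d) \<in> M \<and> a < c \<and> c < b \<and> b < d)"

definition D :: "nat \<Rightarrow> (nat \<times> nat) set set" where
  "D n = {M. perfect_matching n M \<and> non_crossing M}"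

definition shift :: "nat \<Rightarrow> nat \<Rightarrow> nat" where
  "shift k i = (if i < k then i else i + 2)"

definition l :: "nat \<Rightarrow> (nat \<times> nat) set \<Rightarrow> (nat \<times> nat) set" where
  "l k M = insert (k, k+1) ((\<lambda>(i,j). (shift k i, shift k j)) ` M)"

definition unshift :: "nat \<Rightarrow> nat \<Rightarrow> nat" where
  "unshift k i = (if i < k then i else i - 2)"

definition remove_arc :: "nat \<Rightarrow> (nat \<times> nat) set \<Rightarrow> (nat \<times> nat) set" where
  "remove_arc k M = (\<lambda>(i,j). (unshift k i, unshift k j)) ` (M - {(k, k+1)})"

text \<open>Restricted sequence (k_n, ..., k_1) of a diagram with n chords, as a list.\<close>
fun rseq :: "nat \<Rightarrow> (nat \<times> nat) set \<Rightarrow> nat list" where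
  "rseq 0 M = []"
| "rseq (Suc n) M =
     (let k = (LEAST k. (k, k+1) \<in> M) in k # rseq n (remove_arc k M))"

definition prec :: "nat \<Rightarrow> (nat \<times> nat) set \<Rightarrow> (nat \<times> nat) set \<Rightarrow> bool" where
  "prec n \<alpha> \<beta> \<longleftrightarrow> list_all2 (\<le>) (rseq n \<alpha>) (rseq n \<beta>)"

end

theory Submission imports Defs begin

(* Removing the leftmost short
   arc (m, m+1) of a non-crossing matching cannot push the next short arc further left than m - 1,
   so every restricted sequence satisfies k_(i+1) <= k_i + 1. Inserting the arc (k, k+1) changes the
   restricted sequence by an explicit insertion: k is put in front of the first entry a with
   k <= a + 1, and every entry it passes lowers it by 2 (that removed arc lies to its left).
   For lists of equal length whose upper one satisfies the step condition, this insertion preserves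
   and reflects the componentwise order. *)

fun rseq_insert :: "nat \<Rightarrow> nat list \<Rightarrow> nat list" where
  "rseq_insert k [] = [k]"
| "rseq_insert k (a # as) = (if k \<le> a + 1 then k # a # as else a # rseq_insert (k - 2) as)"

fun admissible :: "nat list \<Rightarrow> bool" where
  "admissible (x # y # r) \<longleftrightarrow> x \<le> y + 1 \<and> admissible (y # r)"
| "admissible _ \<longleftrightarrow> True"

lemma admissible_ConsD: "admissible (x # r) \<Longrightarrow> admissible r"
  by (cases r) auto

lemma list_all2_rseq_insert_Cons_iff:
  assumes "admissible (c # bs)" "length as = length bs" "j \<le> c"
  shows "list_all2 (\<le>) (rseq_insert j as) (c # bs) \<longleftrightarrow> list_all2 (\<le>) as bs"
  using assms
proof (induction as arbitrary: j c bs)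
  case Nil
  then show ?case by simp
next
  case (Cons a as)
  then obtain b bs' where bs: "bs = b # bs'" by (cases bs) auto
  show ?case
  proof (cases "j \<le> a + 1")
    case True
    then show ?thesis using Cons.prems bs by simp
  next
    case False
    have "c \<le> b + 1" using Cons.prems bs by simp
    moreover have "list_all2 (\<le>) (rseq_insert (j - 2) as) (b # bs') \<longleftrightarrow> list_all2 (\<le>) as bs'"
      using Cons.IH Cons.prems bs calculation by simp
    ultimately show ?thesis using False Cons.prems bs by auto
  qed
qed

lemma list_all2_rseq_insert_iff:
  assumes "length as = length bs" "admissible bs"
  shows "list_all2 (\<le>) (rseq_insert k as) (rseq_insert k bs) \<longleftrightarrow> list_all2 (\<le>) as bs"
  using assms
proof (induction as arbitrary: bs k)
  case Nil
  then show ?case by simp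
next
  case (Cons a as)
  then obtain b bs' where bs: "bs = b # bs'" by (cases bs) auto
  have IH: "list_all2 (\<le>) (rseq_insert (k - 2) as) (rseq_insert (k - 2) bs')
      \<longleftrightarrow> list_all2 (\<le>) as bs'"
    using Cons bs admissible_ConsD by simp
  consider "k \<le> a + 1" | "\<not> k \<le> a + 1" "k \<le> b + 1" | "\<not> k \<le> a + 1" "\<not> k \<le> b + 1"
    by blast
  then show ?case
  proof cases
    case 1
    then show ?thesis using bs by auto
  next
    case 2
    then show ?thesis
      using list_all2_rseq_insert_Cons_iff[of b bs' as "k - 2"] Cons.prems bs by auto
  next
    case 3
    then show ?thesis using IH bs by auto
  qed
qed

lemma perfect_matching_arc:
  assumes "perfect_matching n M" "(i, j) \<in> M"
  shows "1 \<le> i \<and> i < j \<and> j \<le> 2 * n"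
proof -
  have "\<forall>(i, j)\<in>M. 1 \<le> i \<and> i < j \<and> j \<le> 2 * n"
    using assms(1) by (simp add: perfect_matching_def)
  then show ?thesis using assms(2) by fast
qed

lemma perfect_matching_cover:
  assumes "perfect_matching n M" "1 \<le> x" "x \<le> 2 * n"
  obtains i j where "(i, j) \<in> M" "x = i \<or> x = j"
proof -
  have "x \<in> {1..2 * n}" using assms(2,3) by simp
  then have "\<exists>!p. p \<in> M \<and> (fst p = x \<or> snd p = x)"
    using assms(1) by (simp add: perfect_matching_def)
  then obtain p where "p \<in> M" "fst p = x \<or> snd p = x" by blast
  then show thesis using that by (cases p) auto
qed

lemma perfect_matching_arc_unique:
  assumes "perfect_matching n M" "(i, j) \<in> M" "(i', j') \<in> M" "x \<in> {i, j}" "x \<in> {i', j'}"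
  shows "(i, j) = (i', j')"
proof -
  have "x \<in> {1..2 * n}" using perfect_matching_arc[OF assms(1,2)] assms(4) by auto
  then have "\<exists>!p. p \<in> M \<and> (fst p = x \<or> snd p = x)"
    using assms(1) by (simp add: perfect_matching_def)
  moreover have "fst (i, j) = x \<or> snd (i, j) = x" "fst (i', j') = x \<or> snd (i', j') = x"
    using assms(4,5) by auto
  ultimately show ?thesis using assms(2,3) by (metis (no_types, lifting))
qed

lemma perfect_matching_avoid_arc:
  assumes "perfect_matching n M" "(m, m') \<in> M" "(i, j) \<in> M" "(i, j) \<noteq> (m, m')"
  shows "i \<notin> {m, m'} \<and> j \<notin> {m, m'}"
  using perfect_matching_arc_unique[OF assms(1,2,3)] assms(4) by (metis insertCI)

lemma non_crossingD:
  assumes "non_crossing M" "(a, b) \<in> M" "(c, d) \<in> M" "a < c" "c < b"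
  shows "b \<ge> d"
  using assms unfolding non_crossing_def by force

text \<open>An arc of minimal length is short: any point inside it would be matched across it.\<close>

lemma non_crossing_short_arc:
  assumes M: "perfect_matching (Suc n) M" and nc: "non_crossing M"
  obtains k where "(k, k + 1) \<in> M"
proof -
  obtain i0 j0 where "(i0, j0) \<in> M" by (rule perfect_matching_cover[OF M, of 1]) simp_all
  then obtain i j where ij: "(i, j) \<in> M"
    and minimal: "\<And>i' j'. (i', j') \<in> M \<Longrightarrow> j - i \<le> j' - i'"
    using ex_has_least_nat[of "\<lambda>p. p \<in> M" "(i0, j0)" "\<lambda>p. snd p - fst p"] by force
  have bounds: "1 \<le> i" "i < j" "j \<le> 2 * Suc n" using perfect_matching_arc[OF M ij] by auto
  show thesis
  proof (cases "j = i + 1")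
    case True
    then show thesis using that ij by blast
  next
    case False
    then have inner: "i + 1 < j" using bounds by simp
    obtain x y where xy: "(x, y) \<in> M" "i + 1 = x \<or> i + 1 = y"
      using perfect_matching_cover[OF M, of "i + 1"] bounds inner by auto
    have "x < y" using perfect_matching_arc[OF M xy(1)] by simp
    show thesis
    proof (cases "x = i + 1")
      case True
      have "y \<le> j" using non_crossingD[OF nc ij xy(1)] True inner by simp
      moreover have "y \<noteq> j"
        using perfect_matching_arc_unique[OF M ij xy(1), of j] True inner by auto
      ultimately show thesis using minimal[OF xy(1)] True \<open>x < y\<close> inner by auto
    next
      case False
      then have y: "y = i + 1" using xy(2) by simp
      moreover have "x \<noteq> i"
        using perfect_matching_arc_unique[OF M ij xy(1), of i] y inner by auto
      ultimately have "x < i" using \<open>x < y\<close> by simp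
      then show thesis using non_crossingD[OF nc xy(1) ij] y inner by simp
    qed
  qed
qed

definition shift_arc :: "nat \<Rightarrow> nat \<times> nat \<Rightarrow> nat \<times> nat" where
  "shift_arc k = (\<lambda>(i, j). (shift k i, shift k j))"

definition unshift_arc :: "nat \<Rightarrow> nat \<times> nat \<Rightarrow> nat \<times> nat" where
  "unshift_arc k = (\<lambda>(i, j). (unshift k i, unshift k j))"

lemma l_eq: "l k M = insert (k, k + 1) (shift_arc k ` M)"
  unfolding l_def shift_arc_def ..

lemma remove_arc_eq: "remove_arc k M = unshift_arc k ` (M - {(k, k + 1)})"
  unfolding remove_arc_def unshift_arc_def ..

lemma remove_arcI:
  "(i, j) \<in> M \<Longrightarrow> (i, j) \<noteq> (m, m + 1) \<Longrightarrow> (unshift m i, unshift m j) \<in> remove_arc m M"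
  unfolding remove_arc_def by (rule image_eqI[where x = "(i, j)"]) auto

lemma remove_arcE:
  assumes "(a, b) \<in> remove_arc m M"
  obtains i j where "(i, j) \<in> M" "(i, j) \<noteq> (m, m + 1)" "a = unshift m i" "b = unshift m j"
  using assms unfolding remove_arc_def by auto

lemma unshift_shift [simp]: "unshift k (shift k i) = i"
  by (simp add: shift_def unshift_def)

lemma unshift_less_iff:
  "x \<notin> {m, m + 1} \<Longrightarrow> y \<notin> {m, m + 1} \<Longrightarrow> unshift m x < unshift m y \<longleftrightarrow> x < y"
  by (auto simp: unshift_def)

lemma unshift_eq_iff:
  "x \<notin> {m, m + 1} \<Longrightarrow> y \<notin> {m, m + 1} \<Longrightarrow> unshift m x = unshift m y \<longleftrightarrow> x = y"
  by (auto simp: unshift_def)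

lemma remove_arc_l: "remove_arc k (l k M) = M"
proof -
  have "l k M - {(k, k + 1)} = shift_arc k ` M"
    by (auto simp: l_eq shift_arc_def shift_def split: if_splits)
  moreover have "unshift_arc k (shift_arc k p) = p" for p
    by (cases p) (simp add: shift_arc_def unshift_arc_def)
  ultimately show ?thesis by (simp add: remove_arc_eq image_image)
qed

lemma remove_arc_l_commute:
  assumes M: "perfect_matching n M" and mm: "(m, m + 1) \<in> M" and "m + 2 \<le> k"
  shows "remove_arc m (l k M) = l (k - 2) (remove_arc m M)"
proof -
  have "l k M - {(m, m + 1)} = insert (k, k + 1) (shift_arc k ` (M - {(m, m + 1)}))"
    using \<open>m + 2 \<le> k\<close> by (auto simp: l_eq shift_arc_def shift_def split: if_splits)
  moreover have "unshift_arc m ` shift_arc k ` (M - {(m, m + 1)})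
      = shift_arc (k - 2) ` unshift_arc m ` (M - {(m, m + 1)})"
    unfolding image_image
  proof (rule image_cong[OF refl])
    fix p assume p: "p \<in> M - {(m, m + 1)}"
    obtain i j where p_eq: "p = (i, j)" by (cases p)
    have "i \<notin> {m, m + 1} \<and> j \<notin> {m, m + 1}"
      using perfect_matching_avoid_arc[OF M mm] p p_eq by blast
    then show "unshift_arc m (shift_arc k p) = shift_arc (k - 2) (unshift_arc m p)"
      using \<open>m + 2 \<le> k\<close> p_eq by (auto simp: unshift_arc_def shift_arc_def shift_def unshift_def)
  qed
  moreover have "unshift_arc m (k, k + 1) = (k - 2, k - 2 + 1)"
    using \<open>m + 2 \<le> k\<close> by (simp add: unshift_arc_def unshift_def)
  ultimately show ?thesis by (simp add: remove_arc_eq l_eq)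
qed

lemma perfect_matching_remove_arc:
  assumes M: "perfect_matching (Suc n) M" and mm: "(m, m + 1) \<in> M"
  shows "perfect_matching n (remove_arc m M)"
  unfolding perfect_matching_def
proof (intro conjI ballI)
  have m: "1 \<le> m" "m + 1 \<le> 2 * Suc n" using perfect_matching_arc[OF M mm] by auto
  note avoid = perfect_matching_avoid_arc[OF M mm]
  show "case p of (a, b) \<Rightarrow> 1 \<le> a \<and> a < b \<and> b \<le> 2 * n" if p: "p \<in> remove_arc m M" for p
  proof (cases p)
    case (Pair a b)
    obtain i j where ij: "(i, j) \<in> M" "(i, j) \<noteq> (m, m + 1)" "a = unshift m i" "b = unshift m j"
      using remove_arcE[of a b m M] p Pair by blast
    have "1 \<le> i" "i < j" "j \<le> 2 * Suc n" using perfect_matching_arc[OF M ij(1)] by auto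
    moreover have "i \<notin> {m, m + 1}" "j \<notin> {m, m + 1}" using avoid[OF ij(1,2)] by auto
    ultimately show ?thesis using m Pair ij(3,4) by (auto simp: unshift_def)
  qed
  fix x assume x: "x \<in> {1..2 * n}"
  define y where "y = shift m x"
  have y: "y \<notin> {m, m + 1}" "1 \<le> y" "y \<le> 2 * Suc n" "unshift m y = x"
    using x m by (auto simp: y_def shift_def unshift_def)
  obtain i j where ij: "(i, j) \<in> M" "y = i \<or> y = j"
    using perfect_matching_cover[OF M y(2,3)] .
  have "(i, j) \<noteq> (m, m + 1)" using ij(2) y(1) by auto
  then have ij_in: "(unshift m i, unshift m j) \<in> remove_arc m M"
    using ij(1) by (rule remove_arcI[rotated])
  show "\<exists>!p. p \<in> remove_arc m M \<and> (fst p = x \<or> snd p = x)"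
  proof (rule ex1I[of _ "(unshift m i, unshift m j)"])
    show "(unshift m i, unshift m j) \<in> remove_arc m M \<and>
        (fst (unshift m i, unshift m j) = x \<or> snd (unshift m i, unshift m j) = x)"
      using ij_in ij(2) y(4) by auto
  next
    fix q assume q: "q \<in> remove_arc m M \<and> (fst q = x \<or> snd q = x)"
    obtain a b where q_eq: "q = (a, b)" by (cases q)
    obtain i' j' where ij': "(i', j') \<in> M" "(i', j') \<noteq> (m, m + 1)"
        "a = unshift m i'" "b = unshift m j'"
      using remove_arcE[of a b m M] q q_eq by blast
    have "i' \<notin> {m, m + 1}" "j' \<notin> {m, m + 1}" using avoid[OF ij'(1,2)] by auto
    then have "y \<in> {i', j'}"
      using q q_eq ij'(3,4) y(1,4) unshift_eq_iff[of _ m y] by auto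
    then have "(i', j') = (i, j)"
      using perfect_matching_arc_unique[OF M ij'(1) ij(1), of y] ij(2) by blast
    then show "q = (unshift m i, unshift m j)" using q_eq ij'(3,4) by simp
  qed
qed

lemma non_crossing_remove_arc:
  assumes M: "perfect_matching n M" and nc: "non_crossing M" and mm: "(m, m + 1) \<in> M"
  shows "non_crossing (remove_arc m M)"
  unfolding non_crossing_def
proof clarify
  fix a b c d
  assume "(a, b) \<in> remove_arc m M" "(c, d) \<in> remove_arc m M" and order: "a < c" "c < b" "b < d"
  then obtain i j i' j'
    where ij: "(i, j) \<in> M" "(i, j) \<noteq> (m, m + 1)" "a = unshift m i" "b = unshift m j"
    and ij': "(i', j') \<in> M" "(i', j') \<noteq> (m, m + 1)" "c = unshift m i'" "d = unshift m j'"
    by (metis remove_arcE)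
  have "i \<notin> {m, m + 1}" "j \<notin> {m, m + 1}" "i' \<notin> {m, m + 1}" "j' \<notin> {m, m + 1}"
    using perfect_matching_avoid_arc[OF M mm ij(1,2)] perfect_matching_avoid_arc[OF M mm ij'(1,2)]
    by auto
  then have "i < i'" "i' < j" "j < j'"
    using order ij(3,4) ij'(3,4) unshift_less_iff by metis+
  then show False using non_crossingD[OF nc ij(1) ij'(1)] by simp
qed

lemma D_remove_arc: "M \<in> D (Suc n) \<Longrightarrow> (m, m + 1) \<in> M \<Longrightarrow> remove_arc m M \<in> D n"
  by (auto simp: D_def intro: perfect_matching_remove_arc non_crossing_remove_arc)

lemma short_arc_l: "(y, y + 1) \<in> l k M \<Longrightarrow> k \<le> y \<or> ((y, y + 1) \<in> M \<and> y + 1 < k)"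
  by (auto simp: l_def shift_def split: if_splits)

lemma Least_short_arc_l_new:
  assumes "\<And>x. (x, x + 1) \<in> M \<Longrightarrow> k \<le> x + 1"
  shows "(LEAST x. (x, x + 1) \<in> l k M) = k"
proof (rule Least_equality)
  show "(k, k + 1) \<in> l k M" by (simp add: l_def)
  show "k \<le> y" if "(y, y + 1) \<in> l k M" for y
    using short_arc_l[OF that] assms by fastforce
qed

lemma Least_short_arc_l_old:
  assumes "(m, m + 1) \<in> M" "\<And>x. (x, x + 1) \<in> M \<Longrightarrow> m \<le> x" "m + 2 \<le> k"
  shows "(LEAST x. (x, x + 1) \<in> l k M) = m"
proof (rule Least_equality)
  show "(m, m + 1) \<in> l k M"
    using assms(1,3) by (force simp: l_eq shift_arc_def shift_def)
  show "m \<le> y" if "(y, y + 1) \<in> l k M" for y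
    using short_arc_l[OF that] assms by fastforce
qed

lemma short_arc_remove_arc_ge:
  assumes M: "perfect_matching n M" and mm: "(m, m + 1) \<in> M"
    and least: "\<And>x. (x, x + 1) \<in> M \<Longrightarrow> m \<le> x"
    and "(y, y + 1) \<in> remove_arc m M"
  shows "m \<le> y + 1"
proof (rule ccontr)
  assume "\<not> m \<le> y + 1"
  obtain i j where ij: "(i, j) \<in> M" "(i, j) \<noteq> (m, m + 1)" "y = unshift m i" "y + 1 = unshift m j"
    using assms(4) remove_arcE by metis
  have "i < j" using perfect_matching_arc[OF M ij(1)] by simp
  then have "(i, j) = (y, y + 1)"
    using ij \<open>\<not> m \<le> y + 1\<close> perfect_matching_avoid_arc[OF M mm ij(1,2)]
    by (auto simp: unshift_def split: if_splits)
  then show False using least ij(1) \<open>\<not> m \<le> y + 1\<close> by fastforce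
qed

lemma length_rseq: "length (rseq n M) = n"
  by (induction n arbitrary: M) (auto simp: Let_def)

lemma rseq_SucE:
  assumes "M \<in> D (Suc n)"
  obtains m where "(m, m + 1) \<in> M" "\<And>x. (x, x + 1) \<in> M \<Longrightarrow> m \<le> x"
    "rseq (Suc n) M = m # rseq n (remove_arc m M)"
proof -
  obtain k where "(k, k + 1) \<in> M"
    using non_crossing_short_arc assms by (auto simp: D_def)
  define m where "m = (LEAST x. (x, x + 1) \<in> M)"
  have "(m, m + 1) \<in> M" unfolding m_def by (rule LeastI) fact
  moreover have "\<And>x. (x, x + 1) \<in> M \<Longrightarrow> m \<le> x" unfolding m_def by (rule Least_le)
  moreover have "rseq (Suc n) M = m # rseq n (remove_arc m M)" by (simp add: m_def Let_def)
  ultimately show thesis by (rule that)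
qed

lemma rseq_l:
  assumes "M \<in> D n" "1 \<le> k" "k \<le> 2 * n + 1"
  shows "rseq (Suc n) (l k M) = rseq_insert k (rseq n M)"
  using assms
proof (induction n arbitrary: M k)
  case 0
  then have "M = {}" by (fastforce simp: D_def dest: perfect_matching_arc)
  then show ?case by (simp add: l_def Least_equality[of "\<lambda>x. x = k"])
next
  case (Suc n)
  obtain m where mm: "(m, m + 1) \<in> M" and least: "\<And>x. (x, x + 1) \<in> M \<Longrightarrow> m \<le> x"
    and rseq_M: "rseq (Suc n) M = m # rseq n (remove_arc m M)"
    using rseq_SucE[OF Suc.prems(1)] by blast
  have M: "perfect_matching (Suc n) M" using Suc.prems(1) by (simp add: D_def)
  show ?case
  proof (cases "k \<le> m + 1")
    case True
    then have "(LEAST x. (x, x + 1) \<in> l k M) = k"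
      using least by (intro Least_short_arc_l_new) fastforce
    then show ?thesis using rseq_M True by (simp add: Let_def remove_arc_l)
  next
    case False
    then have "(LEAST x. (x, x + 1) \<in> l k M) = m"
      using Least_short_arc_l_old[OF mm least] by simp
    then have "rseq (Suc (Suc n)) (l k M) = m # rseq (Suc n) (l (k - 2) (remove_arc m M))"
      using remove_arc_l_commute[OF M mm] False by (simp add: Let_def)
    also have "rseq (Suc n) (l (k - 2) (remove_arc m M))
        = rseq_insert (k - 2) (rseq n (remove_arc m M))"
      using Suc.IH[OF D_remove_arc[OF Suc.prems(1) mm]] False Suc.prems
        perfect_matching_arc[OF M mm] by simp
    finally show ?thesis using rseq_M False by simp
  qed
qed

lemma admissible_rseq: "M \<in> D n \<Longrightarrow> admissible (rseq n M)"
proof (induction n arbitrary: M)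
  case 0
  then show ?case by simp
next
  case (Suc n)
  obtain m where mm: "(m, m + 1) \<in> M" and least: "\<And>x. (x, x + 1) \<in> M \<Longrightarrow> m \<le> x"
    and rseq_M: "rseq (Suc n) M = m # rseq n (remove_arc m M)"
    using rseq_SucE[OF Suc.prems] by blast
  have M': "remove_arc m M \<in> D n" using D_remove_arc[OF Suc.prems mm] .
  show ?case
  proof (cases n)
    case 0
    then show ?thesis using rseq_M by simp
  next
    case (Suc n')
    then obtain m' where "(m', m' + 1) \<in> remove_arc m M"
      and rseq_M': "rseq n (remove_arc m M) = m' # rseq n' (remove_arc m' (remove_arc m M))"
      using rseq_SucE[of "remove_arc m M" n'] M' by blast
    then have "m \<le> m' + 1"
      using short_arc_remove_arc_ge[OF _ mm least] Suc.prems by (auto simp: D_def)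
    then show ?thesis using rseq_M rseq_M' Suc.IH[OF M'] by simp
  qed
qed

theorem mainTheorem9:
  fixes n k :: nat and \<alpha> \<beta> :: "(nat \<times> nat) set"
  assumes "\<alpha> \<in> D n" and "\<beta> \<in> D n" and "1 \<le> k" and "k \<le> 2*n + 1"
  shows "prec n \<alpha> \<beta> \<longleftrightarrow> prec (Suc n) (l k \<alpha>) (l k \<beta>)"
proof -
  have "rseq (Suc n) (l k \<alpha>) = rseq_insert k (rseq n \<alpha>)"
    and "rseq (Suc n) (l k \<beta>) = rseq_insert k (rseq n \<beta>)"
    using rseq_l assms by blast+
  moreover have "admissible (rseq n \<beta>)" using admissible_rseq[OF assms(2)] .
  ultimately show ?thesis
    unfolding prec_def using list_all2_rseq_insert_iff length_rseq by simp
qed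

end
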